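(* For $1\leq p <\infty$, the space $L^{p}(\mu)$ contains an isometric and complemented copy of $\ell^{p}(\mathfrak c,L^{p}[0,1])$.
   Context: Let $\mathcal{B}$ be the Borel $\sigma$-algebra of $\mathbb{R}$, $\lambda$ the Lebesgue measure, and $\mathcal{B}_{\infty}$ the $\sigma$-algebra on $\mathbb{R}^{\mathbb{N}}$ generated by the cylinder sets $\prod_{i=1}^{m}C_{i}\times\prod_{i=m+1}^{\infty}\mathbb{R}$ with $C_i\in\mathcal{B}$, $m\in\mathbb{N}$. Let $\mathcal{F}(\mathcal{B},\lambda)$ be the set of finite rectangles $\prod_{i\in\mathbb{N}}C_{i}$ with $C_i\in\mathcal{B}$ and $\prod_{i}\lambda(C_i)\in[0,\infty)$, with $\mathrm{vol}(\prod_{i}C_i):=\prod_i\lambda(C_i)$. The measure $\mu$ is the restriction to $\mathcal{B}_{\infty}$ of the outer measure $\mu^{\ast}(A):=\inf\{\sum_{n}\mathrm{vol}(\mathscr{C}_{n}) : \mathscr{C}_{n}\in\mathcal{F}(\mathcal{B},\lambda),\ A\subset\bigcup_{n}\mathscr{C}_{n}\}$ ($\inf\varnothing=\infty$). $\ell^{p}(\kappa,X)$ denotes the $\ell^p$-sum of $\kappa$ copies of the Banach space $X$, and $\mathfrak{c}$ is the cardinality of the continuum. No set-theoretic hypothesis beyond ZFC is assumed. *)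

theory Defs
  imports "HOL-Analysis.Analysis"
begin

definition cyl_sets :: "(nat \<Rightarrow> real) set set" where
  "cyl_sets = {{x. \<forall>i<m. x i \<in> C i} | m C. \<forall>i. C i \<in> sets borel}"

definition B_inf :: "(nat \<Rightarrow> real) set set" where
  "B_inf = sigma_sets UNIV cyl_sets"

definition rect :: "(nat \<Rightarrow> real set) \<Rightarrow> (nat \<Rightarrow> real) set" where
  "rect C = {x. \<forall>i. x i \<in> C i}"

text \<open>Partial products of Lebesgue measures (in [0,\<infinity>], with 0 * \<infinity> = 0).\<close>
definition partial_vol :: "(nat \<Rightarrow> real set) \<Rightarrow> nat \<Rightarrow> ennreal" where
  "partial_vol C n = (\<Prod>i<n. emeasure lborel (C i))"

definition finite_rect :: "(nat \<Rightarrow> real set) \<Rightarrow> bool" where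
  "finite_rect C \<longleftrightarrow> (\<forall>i. C i \<in> sets borel) \<and> convergent (partial_vol C)
      \<and> lim (partial_vol C) \<noteq> \<infinity>"

definition vol :: "(nat \<Rightarrow> real set) \<Rightarrow> ennreal" where
  "vol C = lim (partial_vol C)"

text \<open>The outer measure mu^* (Inf of the empty set is \<infinity> in ennreal).\<close>
definition mu_outer :: "(nat \<Rightarrow> real) set \<Rightarrow> ennreal" where
  "mu_outer A = Inf {\<Sum>n. vol (R n) | R. (\<forall>n. finite_rect (R n)) \<and> A \<subseteq> (\<Union>n. rect (R n))}"

definition mu :: "(nat \<Rightarrow> real) measure" where
  "mu = measure_of UNIV B_inf mu_outer"

definition Lp :: "'a measure \<Rightarrow> real \<Rightarrow> ('a \<Rightarrow> real) set" where
  "Lp M p = {f \<in> borel_measurable M. integrable M (\<lambda>x. \<bar>f x\<bar> powr p)}"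

definition Lp_norm :: "'a measure \<Rightarrow> real \<Rightarrow> ('a \<Rightarrow> real) \<Rightarrow> real" where
  "Lp_norm M p f = (\<integral>x. \<bar>f x\<bar> powr p \<partial>M) powr (1 / p)"

definition I01 :: "real measure" where
  "I01 = restrict_space lborel {0..1}"

definition lp_sum :: "'a measure \<Rightarrow> real \<Rightarrow> ('i \<Rightarrow> 'a \<Rightarrow> real) set" where
  "lp_sum M p = {g. (\<forall>i. g i \<in> Lp M p) \<and> (\<lambda>i. Lp_norm M p (g i) powr p) summable_on UNIV}"

definition lp_sum_norm :: "'a measure \<Rightarrow> real \<Rightarrow> ('i \<Rightarrow> 'a \<Rightarrow> real) \<Rightarrow> real" where
  "lp_sum_norm M p g = (\<Sum>\<^sub>\<infinity>i. Lp_norm M p (g i) powr p) powr (1 / p)"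

end

theory Submission
  imports Defs "HOL-Probability.Probability"
begin

text \<open>Restricted to a unit cube \<open>\<Pi>\<^sub>i [c\<^sub>i, c\<^sub>i + 1]\<close>, the measure \<open>mu\<close> is the translate of the
  product of countably many copies of Lebesgue measure on \<open>[0,1]\<close>. Enumerating the rationals as
  \<open>q\<^sub>0, q\<^sub>1, \<dots>\<close>, the cubes with corners \<open>c\<^sub>i(t) = 2 [q\<^sub>i < t]\<close> for \<open>t \<in> \<real>\<close> are pairwise disjoint.
  The embedding \<open>T\<close> puts the \<open>t\<close>-th component of \<open>g\<close>, as a function of the first coordinate, on
  the \<open>t\<close>-th cube; as the cube carries a product probability measure, \<open>T\<close> is an isometry. The
  projection \<open>P\<close> averages \<open>f\<close> on every cube over all coordinates but the first, which is
  contractive by Jensen's inequality, and embeds the result by \<open>T\<close>.\<close>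

section \<open>\<open>L\<^sup>p\<close> norms and Jensen's inequality\<close>

lemma powr_Lp_norm: "p \<noteq> 0 \<Longrightarrow> Lp_norm M p f powr p = (\<integral>x. \<bar>f x\<bar> powr p \<partial>M)"
  unfolding Lp_norm_def by (simp add: powr_powr)

lemma nn_integral_abs_powr_Lp:
  "f \<in> Lp M p \<Longrightarrow> (\<integral>\<^sup>+x. ennreal (\<bar>f x\<bar> powr p) \<partial>M) = ennreal (\<integral>x. \<bar>f x\<bar> powr p \<partial>M)"
  by (intro nn_integral_eq_integral) (auto simp: Lp_def)

lemma nn_integral_abs_powr_Lp_finite:
  "f \<in> Lp M p \<Longrightarrow> (\<integral>\<^sup>+x. ennreal (\<bar>f x\<bar> powr p) \<partial>M) < \<infinity>"
  by (simp add: nn_integral_abs_powr_Lp)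

lemma measurable_Lp: "f \<in> Lp M p \<Longrightarrow> f \<in> borel_measurable M"
  by (simp add: Lp_def)

lemma integral_abs_powr_eq_0_iff:
  assumes "f \<in> Lp M p"
  shows "(\<integral>x. \<bar>f x\<bar> powr p \<partial>M) = 0 \<longleftrightarrow> (AE x in M. f x = 0)"
proof -
  have "(\<integral>x. \<bar>f x\<bar> powr p \<partial>M) = 0 \<longleftrightarrow> (AE x in M. \<bar>f x\<bar> powr p = 0)"
    using assms by (intro integral_nonneg_eq_0_iff_AE) (auto simp: Lp_def)
  then show ?thesis
    by simp
qed

lemma measurable_lp_sum: "g \<in> lp_sum M p \<Longrightarrow> g t \<in> borel_measurable M"
  by (simp add: lp_sum_def Lp_def)

lemma nn_integral_count_space_eq_infsum:
  fixes f :: "'a \<Rightarrow> real"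
  assumes f: "f summable_on UNIV" "\<And>t. f t \<ge> 0" and zero: "\<And>t. t \<notin> K \<Longrightarrow> f t = 0"
  shows "(\<integral>\<^sup>+t. ennreal (f t) \<partial>count_space K) = ennreal (\<Sum>\<^sub>\<infinity>t. f t)"
proof -
  have "f summable_on K"
    using f(1) by (rule summable_on_subset_banach) simp
  then have abs_summable: "Infinite_Set_Sum.abs_summable_on f K"
    using summable_on_iff_abs_summable_on_real abs_summable_equivalent by blast
  then have "(\<integral>\<^sup>+t. ennreal (f t) \<partial>count_space K) = ennreal (infsetsum f K)"
    using f(2) by (intro nn_integral_conv_infsetsum) auto
  also have "infsetsum f K = infsum f K"
    using abs_summable by (rule infsetsum_infsum)
  also have "infsum f K = infsum f UNIV"
    using zero by (intro infsum_cong_neutral) auto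
  finally show ?thesis .
qed

lemma powr_ge_tangent:
  fixes p m y :: real
  assumes p: "p \<ge> 1" and m: "m \<ge> 0" and y: "y \<ge> 0"
  shows "m powr p + p * m powr (p - 1) * (y - m) \<le> y powr p"
proof (cases "m = 0")
  case True
  then show ?thesis by simp
next
  case False
  then have m_pos: "m > 0" using m by simp
  show ?thesis
  proof (cases "y = 0")
    case True
    have "m powr (p - 1) * m = m powr p"
      using m_pos powr_add[of m "p - 1" 1] by simp
    then have "m powr p + p * m powr (p - 1) * (y - m) = (1 - p) * m powr p"
      using True by (simp add: algebra_simps)
    also have "\<dots> \<le> 0"
      using p by (simp add: mult_nonpos_nonneg)
    finally show ?thesis
      using True by simp
  next
    case False
    then have y_pos: "y > 0" using y by simp
    have "(p * m powr (p - 1)) * (y - m) \<le> y powr p - m powr p"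
    proof (rule f''_imp_f'[of "{0<..}" "\<lambda>x. x powr p" "\<lambda>x. p * x powr (p - 1)"
          "\<lambda>x. p * ((p - 1) * x powr (p - 1 - 1))"])
      show "\<And>x. x \<in> {0<..} \<Longrightarrow> ((\<lambda>x. x powr p) has_real_derivative p * x powr (p - 1)) (at x)"
        by (auto intro!: derivative_eq_intros)
      show "\<And>x. x \<in> {0<..} \<Longrightarrow> ((\<lambda>x. p * x powr (p - 1))
          has_real_derivative p * ((p - 1) * x powr (p - 1 - 1))) (at x)"
        by (auto intro!: derivative_eq_intros)
      show "\<And>x. x \<in> {0<..} \<Longrightarrow> 0 \<le> p * ((p - 1) * x powr (p - 1 - 1))"
        using p by auto
    qed (use m_pos y_pos in auto)
    then show ?thesis by simp
  qed
qed

lemma (in prob_space) powr_integral_le_integral_powr: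
  fixes X :: "'a \<Rightarrow> real"
  assumes p: "p \<ge> 1" and X: "integrable M X" "\<And>x. X x \<ge> 0"
    and X_powr: "integrable M (\<lambda>x. X x powr p)"
  shows "(\<integral>x. X x \<partial>M) powr p \<le> (\<integral>x. X x powr p \<partial>M)"
proof -
  define m where "m = (\<integral>x. X x \<partial>M)"
  have m: "m \<ge> 0"
    unfolding m_def using X by simp
  have "(\<integral>x. m powr p + p * m powr (p - 1) * (X x - m) \<partial>M) \<le> (\<integral>x. X x powr p \<partial>M)"
    using X X_powr m p by (intro integral_mono powr_ge_tangent) auto
  also have "(\<integral>x. m powr p + p * m powr (p - 1) * (X x - m) \<partial>M)
      = m powr p + p * m powr (p - 1) * (m - m)"
    using X by (simp add: prob_space m_def)
  finally show ?thesis
    by (simp add: m_def)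
qed

lemma abs_le_1_plus_abs_powr:
  fixes x p :: real
  assumes "p \<ge> 1"
  shows "\<bar>x\<bar> \<le> 1 + \<bar>x\<bar> powr p"
proof (cases "\<bar>x\<bar> \<le> 1")
  case True
  then show ?thesis
    using powr_ge_zero[of "\<bar>x\<bar>" p] by linarith
next
  case False
  then have "\<bar>x\<bar> powr 1 \<le> \<bar>x\<bar> powr p"
    using assms by (intro powr_mono) auto
  then show ?thesis
    using False by simp
qed

lemma (in prob_space) integrable_if_nn_integral_abs_powr_finite:
  fixes F :: "'a \<Rightarrow> real"
  assumes p: "p \<ge> 1" and [measurable]: "F \<in> borel_measurable M"
    and fin: "(\<integral>\<^sup>+x. ennreal (\<bar>F x\<bar> powr p) \<partial>M) < \<infinity>"
  shows "integrable M F" "integrable M (\<lambda>x. \<bar>F x\<bar> powr p)"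
proof -
  show F_powr: "integrable M (\<lambda>x. \<bar>F x\<bar> powr p)"
    using fin by (intro integrableI_bounded) auto
  show "integrable M F"
  proof (rule Bochner_Integration.integrable_bound)
    show "integrable M (\<lambda>x. 1 + \<bar>F x\<bar> powr p)"
      using F_powr by simp
    show "AE x in M. norm (F x) \<le> norm (1 + \<bar>F x\<bar> powr p)"
      using abs_le_1_plus_abs_powr[OF p] by auto
  qed simp
qed

lemma (in prob_space) abs_integral_powr_le_nn_integral:
  fixes F :: "'a \<Rightarrow> real"
  assumes p: "p \<ge> 1" and F [measurable]: "F \<in> borel_measurable M"
  shows "ennreal (\<bar>\<integral>x. F x \<partial>M\<bar> powr p) \<le> (\<integral>\<^sup>+x. ennreal (\<bar>F x\<bar> powr p) \<partial>M)"
proof (cases "(\<integral>\<^sup>+x. ennreal (\<bar>F x\<bar> powr p) \<partial>M) < \<infinity>")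
  case False
  then show ?thesis
    by (simp add: less_top[symmetric])
next
  case True
  note int = integrable_if_nn_integral_abs_powr_finite[OF p F True]
  have "\<bar>\<integral>x. F x \<partial>M\<bar> powr p \<le> (\<integral>x. \<bar>F x\<bar> \<partial>M) powr p"
    using p by (intro powr_mono2) (auto intro!: integral_abs_bound)
  also have "\<dots> \<le> (\<integral>x. \<bar>F x\<bar> powr p \<partial>M)"
    using int p by (intro powr_integral_le_integral_powr) auto
  also have "ennreal \<dots> = (\<integral>\<^sup>+x. ennreal (\<bar>F x\<bar> powr p) \<partial>M)"
    using int by (intro nn_integral_eq_integral[symmetric]) auto
  finally show ?thesis
    using p by (auto intro: ennreal_leI order_trans)
qed

section \<open>The measure \<open>mu\<close> as a Caratheodory extension\<close>

lemma tendsto_partial_vol: "finite_rect C \<Longrightarrow> partial_vol C \<longlonglongrightarrow> vol C"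
  unfolding finite_rect_def vol_def by (simp add: convergent_LIMSEQ_iff)

lemma finite_rectI:
  assumes "\<And>i. C i \<in> sets borel" "partial_vol C \<longlonglongrightarrow> L" "L \<noteq> \<infinity>"
  shows "finite_rect C" "vol C = L"
  using assms unfolding finite_rect_def vol_def by (auto simp: convergent_def limI)

lemma finite_rect_empty: "finite_rect (\<lambda>_. {})" "vol (\<lambda>_. {}) = 0"
proof -
  have "partial_vol (\<lambda>_. {}) \<longlonglongrightarrow> 0"
    by (rule LIMSEQ_offset[where k=1]) (simp add: partial_vol_def)
  then show "finite_rect (\<lambda>_. {})" "vol (\<lambda>_. {}) = 0"
    using finite_rectI[of "\<lambda>_. {}" 0] by auto
qed

lemma finite_rect_unit_cube:
  fixes c :: "nat \<Rightarrow> real"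
  shows "finite_rect (\<lambda>i. {c i..c i + 1})" "vol (\<lambda>i. {c i..c i + 1}) = 1"
proof -
  have "partial_vol (\<lambda>i. {c i..c i + 1}) = (\<lambda>_. 1)"
    by (simp add: partial_vol_def fun_eq_iff)
  then show "finite_rect (\<lambda>i. {c i..c i + 1})" "vol (\<lambda>i. {c i..c i + 1}) = 1"
    using finite_rectI[of "\<lambda>i. {c i..c i + 1}" 1] by auto
qed

lemma partial_vol_fun_upd:
  assumes "j < n"
  shows "partial_vol (C(j := X)) n
    = emeasure lborel X * (\<Prod>i\<in>{..<n} - {j}. emeasure lborel (C i))"
proof -
  have "partial_vol (C(j := X)) n = (\<Prod>i\<in>insert j ({..<n} - {j}). emeasure lborel ((C(j := X)) i))"
    unfolding partial_vol_def using assms by (intro prod.cong) auto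
  also have "\<dots> = emeasure lborel X * (\<Prod>i\<in>{..<n} - {j}. emeasure lborel (C i))"
    by (subst prod.insert) (auto intro!: prod.cong)
  finally show ?thesis .
qed

lemma eventually_partial_vol_fun_upd_eq_0:
  assumes C: "finite_rect C"
    and degenerate: "emeasure lborel (C j) = 0 \<or> emeasure lborel (C j) = \<infinity>"
    and le: "emeasure lborel X \<le> emeasure lborel (C j)"
  shows "eventually (\<lambda>n. partial_vol (C(j := X)) n = 0) sequentially"
proof -
  have "vol C < \<infinity>"
    using C by (simp add: finite_rect_def vol_def less_top)
  with tendsto_partial_vol[OF C] have "eventually (\<lambda>n. partial_vol C n < \<infinity>) sequentially"
    by (rule order_tendstoD(2))
  with eventually_gt_at_top[of j] show ?thesis
  proof eventually_elim
    case (elim n)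
    then show ?case
      using degenerate le partial_vol_fun_upd[OF elim(1), of C X] partial_vol_fun_upd[OF elim(1), of C "C j"]
      by (auto simp: ennreal_mult_eq_top_iff)
  qed
qed

lemma tendsto_partial_vol_fun_upd:
  assumes C: "finite_rect C" and "emeasure lborel (C j) \<noteq> 0" "emeasure lborel (C j) \<noteq> \<infinity>"
    and "emeasure lborel X \<le> emeasure lborel (C j)"
  shows "partial_vol (C(j := X)) \<longlonglongrightarrow> emeasure lborel X / emeasure lborel (C j) * vol C"
proof -
  let ?r = "emeasure lborel X / emeasure lborel (C j)"
  have "(\<lambda>n. ?r * partial_vol C n) \<longlonglongrightarrow> ?r * vol C"
    using assms by (intro ennreal_tendsto_cmult tendsto_partial_vol)
      (auto simp: ennreal_divide_eq_top_iff top_unique less_top[symmetric])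
  moreover have "eventually (\<lambda>n. ?r * partial_vol C n = partial_vol (C(j := X)) n) sequentially"
    using eventually_gt_at_top[of j]
  proof eventually_elim
    case (elim n)
    have "?r * emeasure lborel (C j) = emeasure lborel X"
      using assms by (simp add: ennreal_divide_times less_top)
    then show ?case
      using partial_vol_fun_upd[OF elim, of C X] partial_vol_fun_upd[OF elim, of C "C j"]
      by (simp flip: mult.assoc)
  qed
  ultimately show ?thesis
    by (rule Lim_transform_eventually)
qed

lemma finite_rect_fun_upd:
  assumes C: "finite_rect C" and X: "X \<in> sets borel" "X \<subseteq> C j"
  shows "finite_rect (C(j := X))"
proof -
  have le: "emeasure lborel X \<le> emeasure lborel (C j)"
    using C X by (intro emeasure_mono) (auto simp: finite_rect_def)
  have "\<exists>L. partial_vol (C(j := X)) \<longlonglongrightarrow> L \<and> L \<noteq> \<infinity>"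
  proof (cases "emeasure lborel (C j) = 0 \<or> emeasure lborel (C j) = \<infinity>")
    case True
    then have "partial_vol (C(j := X)) \<longlonglongrightarrow> 0"
      using C le by (intro tendsto_eventually eventually_partial_vol_fun_upd_eq_0)
    then show ?thesis
      by auto
  next
    case False
    then have "emeasure lborel X / emeasure lborel (C j) * vol C \<noteq> \<infinity>"
      using C le by (auto simp: ennreal_mult_eq_top_iff ennreal_divide_eq_top_iff top_unique
          finite_rect_def vol_def)
    then show ?thesis
      using tendsto_partial_vol_fun_upd[OF C _ _ le] False by blast
  qed
  then obtain L where L: "partial_vol (C(j := X)) \<longlonglongrightarrow> L" "L \<noteq> \<infinity>"
    by blast
  show ?thesis
    by (rule finite_rectI(1)[OF _ L]) (use C X in \<open>auto simp: finite_rect_def\<close>)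
qed

lemma vol_fun_upd_split:
  assumes C: "finite_rect C"
    and X: "X \<in> sets borel" "Y \<in> sets borel" "X \<inter> Y = {}" "X \<union> Y = C j"
  shows "vol (C(j := X)) + vol (C(j := Y)) = vol C"
proof -
  have "(\<lambda>n. partial_vol (C(j := X)) n + partial_vol (C(j := Y)) n)
      \<longlonglongrightarrow> vol (C(j := X)) + vol (C(j := Y))"
    using C X by (intro tendsto_add tendsto_partial_vol finite_rect_fun_upd) auto
  moreover have "eventually (\<lambda>n. partial_vol (C(j := X)) n + partial_vol (C(j := Y)) n
      = partial_vol C n) sequentially"
    using eventually_gt_at_top[of j]
  proof eventually_elim
    case (elim n)
    have "emeasure lborel (C j) = emeasure lborel X + emeasure lborel Y"
      using X by (metis plus_emeasure sets_lborel)
    then show ?case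
      using partial_vol_fun_upd[OF elim, of C] partial_vol_fun_upd[OF elim, of C "C j"]
      by (simp add: distrib_right)
  qed
  ultimately have "partial_vol C \<longlonglongrightarrow> vol (C(j := X)) + vol (C(j := Y))"
    by (rule Lim_transform_eventually)
  then show ?thesis
    using tendsto_partial_vol[OF C] LIMSEQ_unique by blast
qed

definition rect_cover :: "(nat \<Rightarrow> real) set \<Rightarrow> (nat \<Rightarrow> nat \<Rightarrow> real set) \<Rightarrow> bool" where
  "rect_cover A R \<longleftrightarrow> (\<forall>n. finite_rect (R n)) \<and> A \<subseteq> (\<Union>n. rect (R n))"

lemma mu_outer_eq_INF: "mu_outer A = (INF R\<in>{R. rect_cover A R}. \<Sum>n. vol (R n))"
  unfolding mu_outer_def rect_cover_def by (simp add: image_def) (metis (no_types, lifting))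

lemma mu_outer_le_cover: "rect_cover A R \<Longrightarrow> mu_outer A \<le> (\<Sum>n. vol (R n))"
  unfolding mu_outer_eq_INF by (rule INF_lower) auto

lemma mu_outer_greatest:
  "(\<And>R. rect_cover A R \<Longrightarrow> x \<le> (\<Sum>n. vol (R n))) \<Longrightarrow> x \<le> mu_outer A"
  unfolding mu_outer_eq_INF by (rule INF_greatest) auto

lemma mu_outer_less_cover: "mu_outer A < e \<Longrightarrow> \<exists>R. rect_cover A R \<and> (\<Sum>n. vol (R n)) < e"
  unfolding mu_outer_eq_INF INF_less_iff by auto

lemma mu_outer_empty: "mu_outer {} = 0"
proof -
  have "rect_cover {} (\<lambda>_ _. {})"
    using finite_rect_empty by (auto simp: rect_cover_def)
  from mu_outer_le_cover[OF this] show ?thesis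
    using finite_rect_empty by simp
qed

lemma mu_outer_mono: "A \<subseteq> B \<Longrightarrow> mu_outer A \<le> mu_outer B"
  by (rule mu_outer_greatest, rule mu_outer_le_cover) (auto simp: rect_cover_def)

lemma mu_outer_countably_subadditive: "mu_outer (\<Union>i. A i) \<le> (\<Sum>n. mu_outer (A n))"
proof (rule ennreal_le_epsilon)
  fix e :: real
  assume "0 < e" "(\<Sum>n. mu_outer (A n)) < top"
  then have less: "\<And>n. mu_outer (A n) < mu_outer (A n) + e * (1/2) ^ Suc n"
    by (auto simp add: less_top dest!: ennreal_suminf_lessD)
  obtain B where B: "\<And>n. rect_cover (A n) (B n)"
    and B_le: "\<And>n. (\<Sum>i. vol (B n i)) \<le> mu_outer (A n) + e * (1/2) ^ Suc n"
    by (metis less_imp_le mu_outer_less_cover[OF less])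
  define C where "C = case_prod B \<circ> prod_decode"
  have C: "rect_cover (\<Union>i. A i) C"
    using B unfolding rect_cover_def C_def
    by (auto simp: subset_eq split: prod.splits) (metis prod.case prod_encode_inverse)+
  have "mu_outer (\<Union>i. A i) \<le> (\<Sum>i. vol (C i))"
    using C by (rule mu_outer_le_cover)
  also have "\<dots> = (\<Sum>n. \<Sum>i. vol (B n i))"
    unfolding C_def comp_def by (intro suminf_ennreal_2dimen) auto
  also have "\<dots> \<le> (\<Sum>n. mu_outer (A n) + e * (1/2) ^ Suc n)"
    by (intro suminf_le B_le) auto
  also have "\<dots> = (\<Sum>n. mu_outer (A n)) + (\<Sum>n. ennreal e * ennreal ((1/2) ^ Suc n))"
    using \<open>0 < e\<close> by (subst suminf_add[symmetric])
      (auto simp del: ennreal_suminf_cmult simp add: ennreal_mult[symmetric])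
  also have "\<dots> = (\<Sum>n. mu_outer (A n)) + e"
    unfolding ennreal_suminf_cmult
    by (subst suminf_ennreal_eq[OF zero_le_power power_half_series]) auto
  finally show "mu_outer (\<Union>i. A i) \<le> (\<Sum>n. mu_outer (A n)) + e" .
qed

lemma outer_measure_space_mu_outer: "outer_measure_space (Pow UNIV) mu_outer"
  unfolding outer_measure_space_def positive_def increasing_def countably_subadditive_def
  using mu_outer_empty mu_outer_mono mu_outer_countably_subadditive by auto

lemma mu_outer_Un_le: "mu_outer (A \<union> B) \<le> mu_outer A + mu_outer B"
proof -
  have "mu_outer (\<Union>i. binaryset A B i) \<le> (\<Sum>n. mu_outer (binaryset A B n))"
    by (rule mu_outer_countably_subadditive)
  then show ?thesis
    by (simp add: UN_binaryset_eq suminf_binaryset_eq mu_outer_empty)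
qed

lemma rect_fun_upd: "X \<subseteq> C j \<Longrightarrow> rect (C(j := X)) = rect C \<inter> {x. x j \<in> X}"
  unfolding rect_def by auto

lemma mu_outer_split_le_cover:
  assumes B: "B \<in> sets borel" and R: "rect_cover A R"
  shows "mu_outer ({x. x j \<in> B} \<inter> A) + mu_outer ((UNIV - {x. x j \<in> B}) \<inter> A) \<le> (\<Sum>n. vol (R n))"
proof -
  let ?Z = "{x::nat \<Rightarrow> real. x j \<in> B}"
  define D where "D n = (R n)(j := R n j \<inter> B)" for n
  define E where "E n = (R n)(j := R n j - B)" for n
  have R_fin: "finite_rect (R n)" and R_borel: "R n j \<in> sets borel" for n
    using R by (auto simp: rect_cover_def finite_rect_def)
  have in_R: "x j \<in> R n j" if "x \<in> rect (R n)" for x n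
    using that by (simp add: rect_def)
  have rect_D: "rect (D n) = rect (R n) \<inter> {x. x j \<in> R n j \<inter> B}" for n
    unfolding D_def by (rule rect_fun_upd) auto
  have rect_E: "rect (E n) = rect (R n) \<inter> {x. x j \<in> R n j - B}" for n
    unfolding E_def by (rule rect_fun_upd) auto
  have "rect_cover (?Z \<inter> A) D"
    using R R_fin R_borel B in_R rect_D unfolding rect_cover_def
    by (auto simp: D_def intro!: finite_rect_fun_upd) blast
  then have D: "mu_outer (?Z \<inter> A) \<le> (\<Sum>n. vol (D n))"
    by (rule mu_outer_le_cover)
  have "rect_cover ((UNIV - ?Z) \<inter> A) E"
    using R R_fin R_borel B in_R rect_E unfolding rect_cover_def
    by (auto simp: E_def intro!: finite_rect_fun_upd) blast
  then have E: "mu_outer ((UNIV - ?Z) \<inter> A) \<le> (\<Sum>n. vol (E n))"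
    by (rule mu_outer_le_cover)
  have "vol (D n) + vol (E n) = vol (R n)" for n
    unfolding D_def E_def using R_fin R_borel B by (intro vol_fun_upd_split) auto
  then have "(\<Sum>n. vol (D n)) + (\<Sum>n. vol (E n)) = (\<Sum>n. vol (R n))"
    by (subst suminf_add) auto
  then show ?thesis
    using add_mono[OF D E] by simp
qed

lemma component_in_lambda_system:
  assumes B: "B \<in> sets borel"
  shows "{x. x j \<in> B} \<in> lambda_system UNIV (Pow UNIV) mu_outer"
proof -
  let ?Z = "{x::nat \<Rightarrow> real. x j \<in> B}"
  have "mu_outer (?Z \<inter> A) + mu_outer ((UNIV - ?Z) \<inter> A) = mu_outer A" for A
  proof (rule antisym)
    have "mu_outer A = mu_outer ((?Z \<inter> A) \<union> ((UNIV - ?Z) \<inter> A))"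
      by (rule arg_cong[where f = mu_outer]) blast
    then show "mu_outer A \<le> mu_outer (?Z \<inter> A) + mu_outer ((UNIV - ?Z) \<inter> A)"
      using mu_outer_Un_le[of "?Z \<inter> A" "(UNIV - ?Z) \<inter> A"] by simp
    show "mu_outer (?Z \<inter> A) + mu_outer ((UNIV - ?Z) \<inter> A) \<le> mu_outer A"
      using B by (intro mu_outer_greatest mu_outer_split_le_cover)
  qed
  then show ?thesis
    unfolding lambda_system_def by blast
qed

lemma cylinder_in_sigma_algebra:
  fixes C :: "nat \<Rightarrow> real set" and m :: nat
  assumes "sigma_algebra UNIV M" "\<And>i B. B \<in> sets borel \<Longrightarrow> {x. x i \<in> B} \<in> M"
    and "\<And>i. C i \<in> sets borel"
  shows "{x. \<forall>i<m. x i \<in> C i} \<in> M"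
proof -
  interpret sigma_algebra UNIV M by (fact assms(1))
  show ?thesis
  proof (induction m)
    case 0
    then show ?case using top by simp
  next
    case (Suc m)
    have "{x. \<forall>i<Suc m. x i \<in> C i} = {x. \<forall>i<m. x i \<in> C i} \<inter> {x. x m \<in> C m}"
      by (auto simp: less_Suc_eq)
    then show ?case
      using Int[OF Suc assms(2)[OF assms(3)]] by simp
  qed
qed

lemma B_inf_subset_lambda_system: "B_inf \<subseteq> lambda_system UNIV (Pow UNIV) mu_outer"
proof -
  have "sigma_algebra UNIV (lambda_system UNIV (Pow UNIV) mu_outer)"
    using sigma_algebra.caratheodory_lemma[OF sigma_algebra_Pow outer_measure_space_mu_outer]
    by (simp add: measure_space_def)
  moreover have "cyl_sets \<subseteq> lambda_system UNIV (Pow UNIV) mu_outer"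
  proof
    fix Z
    assume "Z \<in> cyl_sets"
    then obtain m C where Z: "Z = {x. \<forall>i<m. x i \<in> C i}" and C: "\<And>i. C i \<in> sets borel"
      unfolding cyl_sets_def by auto
    show "Z \<in> lambda_system UNIV (Pow UNIV) mu_outer"
      unfolding Z using calculation component_in_lambda_system C by (rule cylinder_in_sigma_algebra)
  qed
  ultimately show ?thesis
    unfolding B_inf_def by (rule sigma_algebra.sigma_sets_subset)
qed

lemma measure_space_mu_outer: "measure_space UNIV B_inf mu_outer"
proof (rule measure_down)
  show "measure_space UNIV (lambda_system UNIV (Pow UNIV) mu_outer) mu_outer"
    using sigma_algebra.caratheodory_lemma[OF sigma_algebra_Pow outer_measure_space_mu_outer]
    by simp
  show "sigma_algebra UNIV B_inf"
    unfolding B_inf_def by (rule sigma_algebra_sigma_sets) auto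
qed (rule B_inf_subset_lambda_system)

lemma space_mu [simp]: "space mu = UNIV"
  unfolding mu_def by simp

lemma sets_mu: "sets mu = B_inf"
  unfolding mu_def B_inf_def by (simp add: sets_measure_of_conv sigma_sets_sigma_sets_eq)

lemma emeasure_mu: "A \<in> B_inf \<Longrightarrow> emeasure mu A = mu_outer A"
  using measure_space_mu_outer unfolding mu_def measure_space_def
  by (intro emeasure_measure_of_sigma) auto

lemma sets_mu_eq_sets_PiM: "sets mu = sets (\<Pi>\<^sub>M i\<in>UNIV. (lborel :: real measure))"
proof -
  let ?G = "{{x::nat \<Rightarrow> real. x i \<in> B} | i B. B \<in> sets borel}"
  have "sets (\<Pi>\<^sub>M i\<in>UNIV. (lborel :: real measure)) = sigma_sets UNIV ?G"
    by (subst sets_PiM_single) (simp add: PiE_UNIV_domain)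
  also have "\<dots> = B_inf"
    unfolding B_inf_def
  proof (rule sigma_sets_eqI)
    fix Z
    assume "Z \<in> ?G"
    then obtain i B where Z: "Z = {x. x i \<in> B}" and B: "B \<in> sets borel"
      by auto
    have "Z = {x. \<forall>k<Suc i. x k \<in> (if k = i then B else UNIV)}"
      unfolding Z by (auto simp: less_Suc_eq)
    moreover have "\<forall>k. (if k = i then B else UNIV) \<in> sets borel"
      using B by auto
    ultimately have "Z \<in> cyl_sets"
      unfolding cyl_sets_def
      by (intro CollectI exI[of _ "Suc i"] exI[of _ "\<lambda>k. if k = i then B else UNIV"]) simp
    then show "Z \<in> sigma_sets UNIV cyl_sets" by (rule sigma_sets.Basic)
  next
    fix Z
    assume "Z \<in> cyl_sets"
    then obtain m C where Z: "Z = {x. \<forall>i<m. x i \<in> C i}" and C: "\<And>i. C i \<in> sets borel"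
      unfolding cyl_sets_def by auto
    have "sigma_algebra UNIV (sigma_sets UNIV ?G)"
      by (rule sigma_algebra_sigma_sets) auto
    moreover have "{x. x i \<in> B} \<in> sigma_sets UNIV ?G" if "B \<in> sets borel" for i B
      using that by (intro sigma_sets.Basic) blast
    ultimately show "Z \<in> sigma_sets UNIV ?G"
      unfolding Z using C by (rule cylinder_in_sigma_algebra)
  qed
  finally show ?thesis
    by (simp add: sets_mu)
qed

lemma measurable_component_mu [measurable]: "(\<lambda>x. x i) \<in> borel_measurable mu"
  by (subst measurable_cong_sets[OF sets_mu_eq_sets_PiM refl]) simp

lemma sets_mu_component [measurable]: "B \<in> sets borel \<Longrightarrow> {x. x i \<in> B} \<in> sets mu"
  using measurable_sets[OF measurable_component_mu[of i], of B] by (simp add: vimage_def)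

lemma rect_in_sets_mu: "(\<And>i. C i \<in> sets borel) \<Longrightarrow> rect C \<in> sets mu"
  unfolding rect_def Collect_all_eq by (auto intro!: sets.countable_INT)

lemma measurable_into_mu:
  assumes "\<And>i. (\<lambda>y. f y i) \<in> borel_measurable N"
  shows "f \<in> measurable N mu"
proof -
  have "f \<in> measurable N (\<Pi>\<^sub>M i\<in>UNIV. (lborel :: real measure))"
    using assms by (intro measurable_PiM_single') (auto simp: PiE_UNIV_domain)
  then show ?thesis
    by (subst measurable_cong_sets[OF refl sets_mu_eq_sets_PiM])
qed

section \<open>Unit cubes carry the product measure\<close>

lemma space_I01: "space I01 = {0..1}"
  by (simp add: I01_def)

lemma prob_space_I01: "prob_space I01"
  unfolding I01_def by (rule prob_spaceI) (simp add: emeasure_restrict_space space_restrict_space)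

lemma sequence_space_I01: "sequence_space I01"
  by (simp add: sequence_space_def product_prob_space_def product_prob_space_axioms_def
      product_sigma_finite_def prob_space_I01 prob_space_imp_sigma_finite)

lemma emeasure_I01: "X \<in> sets borel \<Longrightarrow> X \<subseteq> {0..1} \<Longrightarrow> emeasure I01 X = emeasure lborel X"
  unfolding I01_def by (intro emeasure_restrict_space) auto

lemma measurable_I01_ident [measurable]: "(\<lambda>s. s) \<in> borel_measurable I01"
  unfolding I01_def by (rule measurable_restrict_space1) simp

definition I01_inf :: "(nat \<Rightarrow> real) measure" where
  "I01_inf = (\<Pi>\<^sub>M i\<in>UNIV. I01)"

lemma prob_space_I01_inf: "prob_space I01_inf"
  unfolding I01_inf_def by (intro prob_space_PiM prob_space_I01)

lemma space_I01_inf: "space I01_inf = {y. \<forall>i. y i \<in> {0..1}}"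
  by (auto simp: I01_inf_def space_PiM space_I01 PiE_iff)

lemma measurable_I01_inf_component [measurable]: "(\<lambda>y. y i) \<in> borel_measurable I01_inf"
proof -
  have "(\<lambda>y. y i) \<in> measurable I01_inf I01"
    unfolding I01_inf_def by (rule measurable_component_singleton) simp
  then show ?thesis
    using measurable_I01_ident by (rule measurable_compose)
qed

definition translate :: "(nat \<Rightarrow> real) \<Rightarrow> (nat \<Rightarrow> real) \<Rightarrow> (nat \<Rightarrow> real)" where
  "translate c y = (\<lambda>i. y i + c i)"

definition unit_cube :: "(nat \<Rightarrow> real) \<Rightarrow> (nat \<Rightarrow> real) set" where
  "unit_cube c = rect (\<lambda>i. {c i..c i + 1})"

lemma measurable_translate [measurable]: "translate c \<in> measurable I01_inf mu"
  unfolding translate_def by (rule measurable_into_mu) simp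

lemma translate_in_unit_cube: "y \<in> space I01_inf \<Longrightarrow> translate c y \<in> unit_cube c"
  by (auto simp: space_I01_inf translate_def unit_cube_def rect_def)

lemma unit_cube_in_sets_mu [measurable]: "unit_cube c \<in> sets mu"
  unfolding unit_cube_def by (rule rect_in_sets_mu) simp

lemma emeasure_lborel_vimage_plus:
  fixes a :: real
  assumes "C \<in> sets borel"
  shows "emeasure lborel {s. s + a \<in> C} = emeasure lborel C"
proof -
  have "emeasure lborel C = emeasure (distr lborel borel ((+) a)) C"
    by (simp add: lborel_distr_plus)
  also have "\<dots> = emeasure lborel ((+) a -` C \<inter> space lborel)"
    using assms by (intro emeasure_distr) auto
  also have "(+) a -` C \<inter> space lborel = {s. s + a \<in> C}"
    by (auto simp: add.commute)
  finally show ?thesis by simp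
qed

lemma emeasure_I01_inf_vimage_rect_le:
  assumes C: "finite_rect C"
  shows "emeasure I01_inf (translate c -` rect C \<inter> space I01_inf) \<le> vol C"
proof (rule LIMSEQ_le_const[OF tendsto_partial_vol[OF C]], intro exI allI impI)
  fix m :: nat
  have C_borel: "C i \<in> sets borel" for i
    using C by (auto simp: finite_rect_def)
  define X where "X i = (\<lambda>s. s + c i) -` C i \<inter> space I01" for i
  have X: "X i \<in> sets I01" for i
  proof -
    have "(\<lambda>s. s + c i) \<in> borel_measurable I01" by measurable
    then show ?thesis
      unfolding X_def using C_borel by (rule measurable_sets)
  qed
  define E where "E = prod_emb UNIV (\<lambda>_. I01) {..<m} (PiE {..<m} X)"
  have "translate c -` rect C \<inter> space I01_inf \<subseteq> E"
    by (auto simp: E_def prod_emb_def X_def translate_def rect_def I01_inf_def space_I01 space_PiM PiE_iff)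
  then have "emeasure I01_inf (translate c -` rect C \<inter> space I01_inf) \<le> emeasure I01_inf E"
    using X unfolding I01_inf_def E_def by (intro emeasure_mono sets_PiM_I) auto
  also have "emeasure I01_inf E = (\<Prod>i<m. emeasure I01 (X i))"
    unfolding I01_inf_def E_def using sequence_space_I01 X
    by (subst product_prob_space.emeasure_PiM_emb) (auto simp: sequence_space_def)
  also have "\<dots> \<le> (\<Prod>i<m. emeasure lborel (C i))"
  proof (rule prod_mono_ennreal)
    fix i
    have "X i \<in> sets borel" "X i \<subseteq> {0..1}"
      using X[of i] by (auto simp: I01_def sets_restrict_space space_restrict_space X_def)
    then have "emeasure I01 (X i) = emeasure lborel (X i)"
      by (rule emeasure_I01)
    also have "\<dots> \<le> emeasure lborel {s. s + c i \<in> C i}"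
      using C_borel[of i] by (intro emeasure_mono) (auto simp: X_def)
    also have "\<dots> = emeasure lborel (C i)"
      using C_borel by (rule emeasure_lborel_vimage_plus)
    finally show "emeasure I01 (X i) \<le> emeasure lborel (C i)" .
  qed
  finally show "emeasure I01_inf (translate c -` rect C \<inter> space I01_inf) \<le> partial_vol C m"
    unfolding partial_vol_def .
qed

lemma emeasure_I01_inf_vimage_le:
  assumes A: "A \<in> sets mu"
  shows "emeasure I01_inf (translate c -` A \<inter> space I01_inf) \<le> emeasure mu (A \<inter> unit_cube c)"
proof -
  have "emeasure I01_inf (translate c -` A \<inter> space I01_inf) \<le> mu_outer (A \<inter> unit_cube c)"
  proof (rule mu_outer_greatest)
    fix R
    assume R: "rect_cover (A \<inter> unit_cube c) R"
    have R_sets: "translate c -` rect (R n) \<inter> space I01_inf \<in> sets I01_inf" for n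
      using R by (intro measurable_sets[OF measurable_translate] rect_in_sets_mu)
        (auto simp: rect_cover_def finite_rect_def)
    have "translate c -` A \<inter> space I01_inf \<subseteq> (\<Union>n. translate c -` rect (R n) \<inter> space I01_inf)"
      using R translate_in_unit_cube[of _ c] unfolding rect_cover_def by blast
    then have "emeasure I01_inf (translate c -` A \<inter> space I01_inf)
        \<le> emeasure I01_inf (\<Union>n. translate c -` rect (R n) \<inter> space I01_inf)"
      using R_sets by (intro emeasure_mono sets.countable_UN) auto
    also have "\<dots> \<le> (\<Sum>n. emeasure I01_inf (translate c -` rect (R n) \<inter> space I01_inf))"
      using R_sets by (intro emeasure_subadditive_countably) auto
    also have "\<dots> \<le> (\<Sum>n. vol (R n))"
      using R by (intro suminf_le emeasure_I01_inf_vimage_rect_le) (auto simp: rect_cover_def)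
    finally show "emeasure I01_inf (translate c -` A \<inter> space I01_inf) \<le> (\<Sum>n. vol (R n))" .
  qed
  then show ?thesis
    using A by (simp add: emeasure_mu sets_mu[symmetric])
qed

lemma emeasure_mu_unit_cube_le: "emeasure mu (unit_cube c) \<le> 1"
proof -
  define R where "R n = (if n = 0 then (\<lambda>i. {c i..c i + 1}) else (\<lambda>_. {}))" for n :: nat
  have "rect_cover (unit_cube c) R"
    unfolding rect_cover_def unit_cube_def R_def using finite_rect_unit_cube finite_rect_empty
    by (auto intro!: exI[of _ 0])
  then have "mu_outer (unit_cube c) \<le> (\<Sum>n. vol (R n))"
    by (rule mu_outer_le_cover)
  also have "(\<Sum>n. vol (R n)) = 1"
    using finite_rect_unit_cube finite_rect_empty by (subst suminf_finite[of "{0}"]) (auto simp: R_def)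
  finally show ?thesis
    using unit_cube_in_sets_mu[of c] by (simp add: emeasure_mu sets_mu[symmetric])
qed

text \<open>The covering bound gives \<open>\<ge>\<close> for \<open>A\<close> and for its complement. The right-hand sides add
  up to \<open>1\<close> and the left-hand sides to at most \<open>1\<close>, which forces equality.\<close>
lemma emeasure_mu_Int_unit_cube:
  assumes A: "A \<in> sets mu"
  shows "emeasure mu (A \<inter> unit_cube c) = emeasure I01_inf (translate c -` A \<inter> space I01_inf)"
proof -
  interpret I01_inf: prob_space I01_inf by (rule prob_space_I01_inf)
  have A': "UNIV - A \<in> sets mu"
    using A by (metis sets.compl_sets space_mu)
  define a where "a = emeasure mu (A \<inter> unit_cube c)"
  define b where "b = emeasure mu ((UNIV - A) \<inter> unit_cube c)"
  define a' where "a' = emeasure I01_inf (translate c -` A \<inter> space I01_inf)"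
  define b' where "b' = emeasure I01_inf (translate c -` (UNIV - A) \<inter> space I01_inf)"
  have le: "a' \<le> a" "b' \<le> b"
    unfolding a_def a'_def b_def b'_def using A A' by (auto intro!: emeasure_I01_inf_vimage_le)
  have "a + b = emeasure mu (unit_cube c)"
    unfolding a_def b_def using A A'
    by (subst plus_emeasure) (auto intro!: arg_cong[where f = "emeasure mu"])
  then have ab: "a + b \<le> 1"
    using emeasure_mu_unit_cube_le by simp
  have "a' + b' = emeasure I01_inf (space I01_inf)"
    unfolding a'_def b'_def using A A' measurable_sets[OF measurable_translate]
    by (subst plus_emeasure) (auto intro!: arg_cong[where f = "emeasure I01_inf"])
  then have ab': "a' + b' = 1"
    by (simp add: I01_inf.emeasure_space_1)
  then have "b' \<noteq> top"
    by (metis ennreal_add_eq_top ennreal_one_neq_top)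
  moreover have "b' + a \<le> b' + a'"
    using le ab ab' by (metis add_left_mono order_trans add.commute)
  ultimately have "a \<le> a'"
    by (simp add: ennreal_add_left_cancel_le)
  then show ?thesis
    using le unfolding a_def a'_def by simp
qed

lemma density_mu_unit_cube: "density mu (indicator (unit_cube c)) = distr I01_inf mu (translate c)"
proof (rule measure_eqI)
  fix A
  assume "A \<in> sets (density mu (indicator (unit_cube c)))"
  then have A: "A \<in> sets mu" by simp
  have "emeasure (density mu (indicator (unit_cube c))) A
      = (\<integral>\<^sup>+x. indicator (unit_cube c) x * indicator A x \<partial>mu)"
    using A by (subst emeasure_density) (auto intro!: nn_integral_cong)
  also have "\<dots> = (\<integral>\<^sup>+x. indicator (A \<inter> unit_cube c) x \<partial>mu)"
    by (intro nn_integral_cong) (auto split: split_indicator)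
  also have "\<dots> = emeasure (distr I01_inf mu (translate c)) A"
    using A by (simp add: emeasure_mu_Int_unit_cube emeasure_distr)
  finally show "emeasure (density mu (indicator (unit_cube c))) A = emeasure (distr I01_inf mu (translate c)) A" .
qed simp

lemma nn_integral_mu_unit_cube:
  assumes [measurable]: "F \<in> borel_measurable mu"
  shows "(\<integral>\<^sup>+x. indicator (unit_cube c) x * F x \<partial>mu) = (\<integral>\<^sup>+y. F (translate c y) \<partial>I01_inf)"
proof -
  have "(\<integral>\<^sup>+x. indicator (unit_cube c) x * F x \<partial>mu)
      = (\<integral>\<^sup>+x. F x \<partial>density mu (indicator (unit_cube c)))"
    by (subst nn_integral_density) auto
  also have "\<dots> = (\<integral>\<^sup>+y. F (translate c y) \<partial>I01_inf)"
    by (simp add: density_mu_unit_cube nn_integral_distr)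
  finally show ?thesis .
qed

lemma measurable_case_nat_I01_inf [measurable]:
  "(\<lambda>(s, \<omega>). case_nat s \<omega>) \<in> measurable (I01 \<Otimes>\<^sub>M I01_inf) I01_inf"
  unfolding I01_inf_def by measurable

lemma nn_integral_I01_inf_case_nat:
  assumes [measurable]: "G \<in> borel_measurable I01_inf"
  shows "(\<integral>\<^sup>+y. G y \<partial>I01_inf) = (\<integral>\<^sup>+s. \<integral>\<^sup>+\<omega>. G (case_nat s \<omega>) \<partial>I01_inf \<partial>I01)"
proof -
  have "(\<integral>\<^sup>+y. G y \<partial>I01_inf)
      = (\<integral>\<^sup>+y. G y \<partial>distr (I01 \<Otimes>\<^sub>M I01_inf) I01_inf (\<lambda>(s, \<omega>). case_nat s \<omega>))"
    unfolding I01_inf_def by (simp add: sequence_space.PiM_iter[OF sequence_space_I01])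
  also have "\<dots> = (\<integral>\<^sup>+z. G (case_prod case_nat z) \<partial>(I01 \<Otimes>\<^sub>M I01_inf))"
    by (subst nn_integral_distr) auto
  also have "\<dots> = (\<integral>\<^sup>+s. \<integral>\<^sup>+\<omega>. G (case_nat s \<omega>) \<partial>I01_inf \<partial>I01)"
    using prob_space_imp_sigma_finite[OF prob_space_I01_inf]
    by (subst sigma_finite_measure.nn_integral_fst[symmetric]) auto
  finally show ?thesis .
qed

definition cube_point :: "(nat \<Rightarrow> real) \<Rightarrow> real \<Rightarrow> (nat \<Rightarrow> real) \<Rightarrow> (nat \<Rightarrow> real)" where
  "cube_point c s \<omega> = translate c (case_nat s \<omega>)"

lemma measurable_cube_point [measurable]:
  "(\<lambda>(s, \<omega>). cube_point c s \<omega>) \<in> measurable (I01 \<Otimes>\<^sub>M I01_inf) mu"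
proof -
  have "(\<lambda>z. translate c (case_prod case_nat z)) \<in> measurable (I01 \<Otimes>\<^sub>M I01_inf) mu"
    using measurable_case_nat_I01_inf measurable_translate by (rule measurable_compose)
  then show ?thesis
    by (simp add: cube_point_def case_prod_beta')
qed

lemma nn_integral_unit_cube_fibres:
  assumes F [measurable]: "F \<in> borel_measurable mu"
  shows "(\<integral>\<^sup>+x. indicator (unit_cube c) x * F x \<partial>mu)
    = (\<integral>\<^sup>+s. \<integral>\<^sup>+\<omega>. F (cube_point c s \<omega>) \<partial>I01_inf \<partial>I01)"
proof -
  have "(\<lambda>y. F (translate c y)) \<in> borel_measurable I01_inf"
    using measurable_translate F by (rule measurable_compose)
  then show ?thesis
    unfolding nn_integral_mu_unit_cube[OF F] cube_point_def by (rule nn_integral_I01_inf_case_nat)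
qed

lemma cube_point_in_unit_cube:
  "s \<in> {0..1} \<Longrightarrow> \<omega> \<in> space I01_inf \<Longrightarrow> cube_point c s \<omega> \<in> unit_cube c"
  unfolding cube_point_def
  by (rule translate_in_unit_cube) (auto simp: space_I01_inf split: nat.split)

lemma cube_point_0: "cube_point c s \<omega> 0 = s + c 0"
  by (simp add: cube_point_def translate_def)

lemma measurable_cube_fibres [measurable]:
  assumes [measurable]: "f \<in> borel_measurable mu"
  shows "(\<lambda>(s, \<omega>). f (cube_point c s \<omega>)) \<in> borel_measurable (I01 \<Otimes>\<^sub>M I01_inf)"
proof -
  have "(\<lambda>z. f ((\<lambda>(s, \<omega>). cube_point c s \<omega>) z)) \<in> borel_measurable (I01 \<Otimes>\<^sub>M I01_inf)"
    using measurable_cube_point by (rule measurable_compose) simp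
  then show ?thesis
    by (simp add: case_prod_beta')
qed

lemma measurable_cube_fibre:
  assumes "f \<in> borel_measurable mu" "s \<in> space I01"
  shows "(\<lambda>\<omega>. f (cube_point c s \<omega>)) \<in> borel_measurable I01_inf"
  using measurable_Pair2[OF measurable_cube_fibres[OF assms(1)] assms(2)] by simp

section \<open>A continuum of disjoint cubes\<close>

text \<open>Two distinct
  reals are separated by a rational, so the corners of their cubes differ by \<open>2\<close> in some
  coordinate and the cubes are disjoint.\<close>
definition corner :: "real \<Rightarrow> nat \<Rightarrow> real" where
  "corner t i = (if of_rat (from_nat i :: rat) < t then 2 else 0)"

definition cube_at :: "real \<Rightarrow> (nat \<Rightarrow> real) set" where
  "cube_at t = unit_cube (corner t)"

lemma cube_at_in_sets_mu [measurable]: "cube_at t \<in> sets mu"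
  unfolding cube_at_def by simp

lemma inj_corner: "inj corner"
proof (rule injI, rule ccontr)
  fix t t'
  assume eq: "corner t = corner t'" and "t \<noteq> t'"
  then have "min t t' < max t t'"
    by (simp add: min_def max_def)
  then obtain r where r: "r \<in> \<rat>" "min t t' < r" "r < max t t'"
    using Rats_dense_in_real by blast
  then obtain q where q: "r = of_rat q"
    by (auto elim: Rats_cases)
  have "corner t (to_nat q) \<noteq> corner t' (to_nat q)"
    using r q by (auto simp: corner_def min_def max_def split: if_splits)
  then show False
    using eq by simp
qed

lemma cube_at_disjoint: "x \<in> cube_at t \<Longrightarrow> x \<in> cube_at t' \<Longrightarrow> t = t'"
proof -
  assume x: "x \<in> cube_at t" "x \<in> cube_at t'"
  have "corner t i = corner t' i" for i
  proof -
    have "x i \<in> {corner t i..corner t i + 1}" "x i \<in> {corner t' i..corner t' i + 1}"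
      using x by (auto simp: cube_at_def unit_cube_def rect_def)
    then show ?thesis
      by (auto simp: corner_def split: if_splits)
  qed
  then show "t = t'"
    using inj_corner by (auto dest: injD)
qed

definition cube_index :: "(nat \<Rightarrow> real) \<Rightarrow> real" where
  "cube_index x = (THE t. x \<in> cube_at t)"

lemma cube_index_eq: "x \<in> cube_at t \<Longrightarrow> cube_index x = t"
  unfolding cube_index_def using cube_at_disjoint by blast

definition zero_extend :: "(real \<Rightarrow> real) \<Rightarrow> real \<Rightarrow> real" where
  "zero_extend H s = (if s \<in> {0..1} then H s else 0)"

lemma measurable_zero_extend [measurable]:
  assumes "H \<in> borel_measurable I01"
  shows "zero_extend H \<in> borel_measurable borel"
proof -
  have "(\<lambda>x. indicator {0..1} x *\<^sub>R H x) \<in> borel_measurable lborel"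
    using assms unfolding I01_def by (subst (asm) borel_measurable_restrict_space_iff) auto
  moreover have "(\<lambda>x. indicator {0..1} x *\<^sub>R H x) = zero_extend H"
    by (auto simp: zero_extend_def fun_eq_iff)
  ultimately show ?thesis by simp
qed

definition cube_embed :: "(real \<Rightarrow> real \<Rightarrow> real) \<Rightarrow> (nat \<Rightarrow> real) \<Rightarrow> real" where
  "cube_embed G x = (if \<exists>t. x \<in> cube_at t
     then zero_extend (G (cube_index x)) (x 0 - corner (cube_index x) 0) else 0)"

lemma cube_embed_cube_at: "x \<in> cube_at t \<Longrightarrow> cube_embed G x = zero_extend (G t) (x 0 - corner t 0)"
  unfolding cube_embed_def using cube_index_eq by auto

lemma cube_embed_cube_point:
  "s \<in> {0..1} \<Longrightarrow> \<omega> \<in> space I01_inf \<Longrightarrow> cube_embed G (cube_point (corner t) s \<omega>) = G t s"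
  using cube_point_in_unit_cube[of s \<omega> "corner t"]
  by (simp add: cube_embed_cube_at cube_at_def cube_point_0 zero_extend_def)

lemma cube_embed_linear:
  "cube_embed (\<lambda>t s. a * G t s + b * H t s) x = a * cube_embed G x + b * cube_embed H x"
  unfolding cube_embed_def zero_extend_def by auto

lemma cube_embed_eq_0:
  assumes "\<And>t. t \<in> K \<Longrightarrow> x \<notin> cube_at t" and "\<And>t s. t \<notin> K \<Longrightarrow> s \<in> {0..1} \<Longrightarrow> G t s = 0"
  shows "cube_embed G x = 0"
proof (cases "\<exists>t. x \<in> cube_at t")
  case True
  then obtain t where t: "x \<in> cube_at t"
    by blast
  then have "t \<notin> K"
    using assms(1) by blast
  then show ?thesis
    using t assms(2) by (simp add: cube_embed_cube_at zero_extend_def)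
qed (simp add: cube_embed_def)

lemma measurable_cube_embed:
  assumes K: "countable K"
    and G_zero: "\<And>t s. t \<notin> K \<Longrightarrow> s \<in> {0..1} \<Longrightarrow> G t s = 0"
    and G_meas: "\<And>t. t \<in> K \<Longrightarrow> G t \<in> borel_measurable I01"
  shows "cube_embed G \<in> borel_measurable mu"
proof (rule measurable_piecewise_restrict[where C = "insert (UNIV - (\<Union>t\<in>K. cube_at t)) (cube_at ` K)"])
  show "countable (insert (UNIV - (\<Union>t\<in>K. cube_at t)) (cube_at ` K))"
    using K by simp
  have "(\<Union>t\<in>K. cube_at t) \<in> sets mu"
    using K by (intro sets.countable_UN') auto
  then show "\<Omega> \<inter> space mu \<in> sets mu" if "\<Omega> \<in> insert (UNIV - (\<Union>t\<in>K. cube_at t)) (cube_at ` K)" for \<Omega>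
    using that by (auto intro!: sets.compl_sets[of _ mu, simplified])
  show "space mu \<subseteq> \<Union> (insert (UNIV - (\<Union>t\<in>K. cube_at t)) (cube_at ` K))"
    by auto
  fix \<Omega>
  assume "\<Omega> \<in> insert (UNIV - (\<Union>t\<in>K. cube_at t)) (cube_at ` K)"
  then consider "\<Omega> = UNIV - (\<Union>t\<in>K. cube_at t)" | t where "t \<in> K" "\<Omega> = cube_at t"
    by auto
  then show "cube_embed G \<in> borel_measurable (restrict_space mu \<Omega>)"
  proof cases
    case 1
    have "cube_embed G x = 0" if x: "x \<in> space (restrict_space mu \<Omega>)" for x
    proof (rule cube_embed_eq_0[OF _ G_zero])
      fix t
      assume "t \<in> K"
      then show "x \<notin> cube_at t"
        using x 1 by (simp add: space_restrict_space)
    qed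
    then show ?thesis
      by (subst measurable_cong[where g = "\<lambda>_. 0"]) auto
  next
    case 2
    have meas: "(\<lambda>x. zero_extend (G t) (x 0 - corner t 0)) \<in> borel_measurable mu"
      using G_meas[OF 2(1)] by measurable
    have "cube_embed G x = zero_extend (G t) (x 0 - corner t 0)"
      if "x \<in> space (restrict_space mu \<Omega>)" for x
      using that 2 by (auto simp: space_restrict_space cube_embed_cube_at)
    then show ?thesis
      by (subst measurable_cong[where g = "\<lambda>x. zero_extend (G t) (x 0 - corner t 0)"])
        (auto intro: measurable_restrict_space1 meas)
  qed
qed

lemma nn_integral_cube_at_cube_embed:
  assumes [measurable]: "cube_embed G \<in> borel_measurable mu"
  shows "(\<integral>\<^sup>+x. indicator (cube_at t) x * ennreal (\<bar>cube_embed G x\<bar> powr p) \<partial>mu)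
    = (\<integral>\<^sup>+s. ennreal (\<bar>G t s\<bar> powr p) \<partial>I01)"
proof -
  interpret I01_inf: prob_space I01_inf by (rule prob_space_I01_inf)
  have "(\<integral>\<^sup>+x. indicator (cube_at t) x * ennreal (\<bar>cube_embed G x\<bar> powr p) \<partial>mu)
      = (\<integral>\<^sup>+s. \<integral>\<^sup>+\<omega>. ennreal (\<bar>cube_embed G (cube_point (corner t) s \<omega>)\<bar> powr p) \<partial>I01_inf \<partial>I01)"
    unfolding cube_at_def by (rule nn_integral_unit_cube_fibres) measurable
  also have "\<dots> = (\<integral>\<^sup>+s. \<integral>\<^sup>+\<omega>. ennreal (\<bar>G t s\<bar> powr p) \<partial>I01_inf \<partial>I01)"
    by (intro nn_integral_cong) (simp add: cube_embed_cube_point space_I01)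
  also have "\<dots> = (\<integral>\<^sup>+s. ennreal (\<bar>G t s\<bar> powr p) \<partial>I01)"
    by (simp add: I01_inf.emeasure_space_1)
  finally show ?thesis .
qed

lemma nn_integral_count_space_indicator_cube_at:
  assumes "t\<^sub>0 \<in> K" "x \<in> cube_at t\<^sub>0"
  shows "(\<integral>\<^sup>+t. indicator (cube_at t) x * v \<partial>count_space K) = v"
proof -
  have "indicator (cube_at t) x * v = v * indicator {t\<^sub>0} t" for t
  proof (cases "t = t\<^sub>0")
    case False
    then have "x \<notin> cube_at t"
      using assms cube_at_disjoint[of x t\<^sub>0 t] by auto
    then show ?thesis
      using False by simp
  qed (use assms in simp)
  then have "(\<integral>\<^sup>+t. indicator (cube_at t) x * v \<partial>count_space K)
      = (\<integral>\<^sup>+t. v * indicator {t\<^sub>0} t \<partial>count_space K)"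
    by (simp only:)
  also have "\<dots> = v * emeasure (count_space K) {t\<^sub>0}"
    using assms by (intro nn_integral_cmult_indicator) simp
  also have "\<dots> = v"
    using assms by simp
  finally show ?thesis .
qed

lemma nn_integral_cube_embed:
  assumes K: "countable K"
    and G_zero: "\<And>t s. t \<notin> K \<Longrightarrow> s \<in> {0..1} \<Longrightarrow> G t s = 0"
    and G_meas: "\<And>t. t \<in> K \<Longrightarrow> G t \<in> borel_measurable I01"
  shows "(\<integral>\<^sup>+x. ennreal (\<bar>cube_embed G x\<bar> powr p) \<partial>mu)
    = (\<integral>\<^sup>+t. (\<integral>\<^sup>+s. ennreal (\<bar>G t s\<bar> powr p) \<partial>I01) \<partial>count_space K)"
proof -
  have [measurable]: "cube_embed G \<in> borel_measurable mu"
    using K G_zero G_meas by (rule measurable_cube_embed)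
  have "ennreal (\<bar>cube_embed G x\<bar> powr p)
      = (\<integral>\<^sup>+t. indicator (cube_at t) x * ennreal (\<bar>cube_embed G x\<bar> powr p) \<partial>count_space K)" for x
  proof (cases "\<exists>t\<in>K. x \<in> cube_at t")
    case True
    then obtain t\<^sub>0 where "t\<^sub>0 \<in> K" "x \<in> cube_at t\<^sub>0"
      by blast
    then show ?thesis
      by (rule nn_integral_count_space_indicator_cube_at[symmetric])
  next
    case False
    then have "cube_embed G x = 0"
      by (intro cube_embed_eq_0[OF _ G_zero]) auto
    moreover have "(\<integral>\<^sup>+t. indicator (cube_at t) x * ennreal (\<bar>cube_embed G x\<bar> powr p) \<partial>count_space K)
        = (\<integral>\<^sup>+t. 0 \<partial>count_space K)"
      using False by (intro nn_integral_cong) auto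
    ultimately show ?thesis
      by simp
  qed
  then have "(\<integral>\<^sup>+x. ennreal (\<bar>cube_embed G x\<bar> powr p) \<partial>mu)
      = (\<integral>\<^sup>+x. \<integral>\<^sup>+t. indicator (cube_at t) x * ennreal (\<bar>cube_embed G x\<bar> powr p) \<partial>count_space K \<partial>mu)"
    by simp
  also have "\<dots> = (\<integral>\<^sup>+t. \<integral>\<^sup>+x. indicator (cube_at t) x * ennreal (\<bar>cube_embed G x\<bar> powr p) \<partial>mu \<partial>count_space K)"
    using K by (intro nn_integral_count_space_nn_integral) auto
  also have "\<dots> = (\<integral>\<^sup>+t. (\<integral>\<^sup>+s. ennreal (\<bar>G t s\<bar> powr p) \<partial>I01) \<partial>count_space K)"
    by (intro nn_integral_cong nn_integral_cube_at_cube_embed) measurable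
  finally show ?thesis .
qed

lemma AE_cube_embed_eq:
  assumes K: "countable K"
    and G_zero: "\<And>t s. t \<notin> K \<Longrightarrow> s \<in> {0..1} \<Longrightarrow> G t s = 0"
    and G'_zero: "\<And>t s. t \<notin> K \<Longrightarrow> s \<in> {0..1} \<Longrightarrow> G' t s = 0"
    and G_meas: "\<And>t. t \<in> K \<Longrightarrow> G t \<in> borel_measurable I01"
    and G'_meas: "\<And>t. t \<in> K \<Longrightarrow> G' t \<in> borel_measurable I01"
    and AE_eq: "\<And>t. t \<in> K \<Longrightarrow> AE s in I01. G t s = G' t s"
  shows "AE x in mu. cube_embed G x = cube_embed G' x"
proof -
  \<comment> \<open>written as a linear combination so that \<open>cube_embed_linear\<close> applies\<close>
  define D where "D t s = 1 * G t s + (-1) * G' t s" for t s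
  have D_zero: "D t s = 0" if "t \<notin> K" "s \<in> {0..1}" for t s
    using G_zero G'_zero that by (simp add: D_def)
  have D_meas: "D t \<in> borel_measurable I01" if "t \<in> K" for t
    using G_meas[OF that] G'_meas[OF that] unfolding D_def by measurable
  have [measurable]: "cube_embed D \<in> borel_measurable mu"
    using K D_zero D_meas by (rule measurable_cube_embed)
  have "(\<integral>\<^sup>+x. ennreal (\<bar>cube_embed D x\<bar> powr 1) \<partial>mu)
      = (\<integral>\<^sup>+t. (\<integral>\<^sup>+s. ennreal (\<bar>D t s\<bar> powr 1) \<partial>I01) \<partial>count_space K)"
    using K D_zero D_meas by (rule nn_integral_cube_embed)
  also have "\<dots> = (\<integral>\<^sup>+t. 0 \<partial>count_space K)"
  proof (intro nn_integral_cong)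
    fix t
    assume "t \<in> space (count_space K)"
    then have "AE s in I01. G t s = G' t s"
      using AE_eq by simp
    then have "AE s in I01. ennreal (\<bar>D t s\<bar> powr 1) = 0"
      by eventually_elim (simp add: D_def)
    then show "(\<integral>\<^sup>+s. ennreal (\<bar>D t s\<bar> powr 1) \<partial>I01) = 0"
      by (subst nn_integral_cong_AE) auto
  qed
  finally have "(\<integral>\<^sup>+x. ennreal (\<bar>cube_embed D x\<bar> powr 1) \<partial>mu) = 0"
    by simp
  then have "AE x in mu. ennreal (\<bar>cube_embed D x\<bar> powr 1) = 0"
    by (subst (asm) nn_integral_0_iff_AE) auto
  moreover have "cube_embed D x = cube_embed G x - cube_embed G' x" for x
    unfolding D_def cube_embed_linear by simp
  ultimately show ?thesis
    by (auto elim: AE_mp)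
qed

section \<open>The isometric embedding\<close>

definition ae_support :: "(real \<Rightarrow> real \<Rightarrow> real) \<Rightarrow> real set" where
  "ae_support g = {t. \<not> (AE s in I01. g t s = 0)}"

text \<open>Components vanishing almost everywhere are replaced by \<open>0\<close>; for \<open>g\<close> in the \<open>\<ell>\<^sup>p\<close>-sum
  only countably many cubes then carry a nonzero function, which makes the embedding
  measurable.\<close>
definition trim :: "(real \<Rightarrow> real \<Rightarrow> real) \<Rightarrow> real \<Rightarrow> real \<Rightarrow> real" where
  "trim g t = (if AE s in I01. g t s = 0 then (\<lambda>_. 0) else g t)"

definition lp_embedding :: "(real \<Rightarrow> real \<Rightarrow> real) \<Rightarrow> (nat \<Rightarrow> real) \<Rightarrow> real" where
  "lp_embedding g = cube_embed (trim g)"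

lemma AE_trim_eq: "AE s in I01. trim g t s = g t s"
proof (cases "AE s in I01. g t s = 0")
  case True
  then show ?thesis
    by eventually_elim (simp add: trim_def True)
qed (simp add: trim_def)

lemma trim_eq_0: "t \<notin> ae_support g \<Longrightarrow> trim g t s = 0"
  by (simp add: trim_def ae_support_def)

lemma measurable_trim: "g t \<in> borel_measurable I01 \<Longrightarrow> trim g t \<in> borel_measurable I01"
  by (simp add: trim_def)

lemma measurable_lp_embedding:
  assumes "countable (ae_support g)" "\<And>t. g t \<in> borel_measurable I01"
  shows "lp_embedding g \<in> borel_measurable mu"
  unfolding lp_embedding_def using assms trim_eq_0 measurable_trim
  by (intro measurable_cube_embed[where K = "ae_support g"]) auto

lemma nn_integral_lp_embedding:
  assumes "countable (ae_support g)" "\<And>t. g t \<in> borel_measurable I01"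
  shows "(\<integral>\<^sup>+x. ennreal (\<bar>lp_embedding g x\<bar> powr p) \<partial>mu)
    = (\<integral>\<^sup>+t. (\<integral>\<^sup>+s. ennreal (\<bar>g t s\<bar> powr p) \<partial>I01) \<partial>count_space (ae_support g))"
proof -
  have "(\<integral>\<^sup>+x. ennreal (\<bar>lp_embedding g x\<bar> powr p) \<partial>mu)
    = (\<integral>\<^sup>+t. (\<integral>\<^sup>+s. ennreal (\<bar>trim g t s\<bar> powr p) \<partial>I01) \<partial>count_space (ae_support g))"
    unfolding lp_embedding_def using assms trim_eq_0 measurable_trim
    by (intro nn_integral_cube_embed) auto
  also have "\<dots> = (\<integral>\<^sup>+t. (\<integral>\<^sup>+s. ennreal (\<bar>g t s\<bar> powr p) \<partial>I01) \<partial>count_space (ae_support g))"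
  proof -
    have "(\<integral>\<^sup>+s. ennreal (\<bar>trim g t s\<bar> powr p) \<partial>I01) = (\<integral>\<^sup>+s. ennreal (\<bar>g t s\<bar> powr p) \<partial>I01)" for t
      using AE_trim_eq[of g t] by (intro nn_integral_cong_AE) (auto elim: AE_mp)
    then show ?thesis
      by simp
  qed
  finally show ?thesis .
qed

lemma ae_support_cong:
  assumes "\<And>t. AE s in I01. g t s = g' t s"
  shows "ae_support g = ae_support g'"
proof -
  have "(AE s in I01. g t s = 0) \<longleftrightarrow> (AE s in I01. g' t s = 0)" for t
    using assms[of t] by (auto elim: AE_mp)
  then show ?thesis
    unfolding ae_support_def by simp
qed

lemma AE_lp_embedding_eq:
  assumes "countable (ae_support g)"
    and "\<And>t. g t \<in> borel_measurable I01" "\<And>t. g' t \<in> borel_measurable I01"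
    and AE_eq: "\<And>t. AE s in I01. g t s = g' t s"
  shows "AE x in mu. lp_embedding g x = lp_embedding g' x"
  unfolding lp_embedding_def
proof (rule AE_cube_embed_eq[where K = "ae_support g"])
  show "AE s in I01. trim g t s = trim g' t s" for t
    using AE_trim_eq[of g t] AE_trim_eq[of g' t] AE_eq[of t] by eventually_elim simp
qed (use assms trim_eq_0 measurable_trim ae_support_cong[OF AE_eq] in auto)

lemma ae_support_linear: "ae_support (\<lambda>t s. a * g t s + b * h t s) \<subseteq> ae_support g \<union> ae_support h"
proof
  fix t
  assume t: "t \<in> ae_support (\<lambda>t s. a * g t s + b * h t s)"
  show "t \<in> ae_support g \<union> ae_support h"
  proof (rule ccontr)
    assume "t \<notin> ae_support g \<union> ae_support h"
    then have "AE s in I01. g t s = 0" "AE s in I01. h t s = 0"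
      by (auto simp: ae_support_def)
    then have "AE s in I01. a * g t s + b * h t s = 0"
      by eventually_elim simp
    then show False
      using t by (simp add: ae_support_def)
  qed
qed

lemma AE_lp_embedding_linear:
  assumes K: "countable (ae_support g)" "countable (ae_support h)"
    and meas: "\<And>t. g t \<in> borel_measurable I01" "\<And>t. h t \<in> borel_measurable I01"
  shows "AE x in mu. lp_embedding (\<lambda>t s. a * g t s + b * h t s) x
    = a * lp_embedding g x + b * lp_embedding h x"
proof -
  let ?u = "\<lambda>t s. a * g t s + b * h t s"
  have "AE x in mu. cube_embed (trim ?u) x = cube_embed (\<lambda>t s. a * trim g t s + b * trim h t s) x"
  proof (rule AE_cube_embed_eq[where K = "ae_support g \<union> ae_support h"])
    show "countable (ae_support g \<union> ae_support h)"
      using K by simp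
    fix t
    show "t \<notin> ae_support g \<union> ae_support h \<Longrightarrow> trim ?u t s = 0" for s
      using ae_support_linear[of a g b h] by (intro trim_eq_0) auto
    show "t \<notin> ae_support g \<union> ae_support h \<Longrightarrow> a * trim g t s + b * trim h t s = 0" for s
      by (simp add: trim_eq_0)
    have "?u t \<in> borel_measurable I01"
      using meas by measurable
    then show "trim ?u t \<in> borel_measurable I01"
      by (rule measurable_trim)
    show "(\<lambda>s. a * trim g t s + b * trim h t s) \<in> borel_measurable I01"
      using measurable_trim[OF meas(1)] measurable_trim[OF meas(2)] by measurable
    show "AE s in I01. trim ?u t s = a * trim g t s + b * trim h t s"
      using AE_trim_eq[of ?u t] AE_trim_eq[of g t] AE_trim_eq[of h t] by eventually_elim simp
  qed
  then show ?thesis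
    unfolding lp_embedding_def cube_embed_linear .
qed

lemma ae_support_lp_sum_iff:
  assumes "g \<in> lp_sum I01 p" "p \<ge> 1"
  shows "t \<in> ae_support g \<longleftrightarrow> Lp_norm I01 p (g t) powr p \<noteq> 0"
  using assms integral_abs_powr_eq_0_iff[of "g t" I01 p]
  by (simp add: ae_support_def powr_Lp_norm lp_sum_def)

lemma countable_ae_support:
  assumes g: "g \<in> lp_sum I01 p" and p: "p \<ge> 1"
  shows "countable (ae_support g)"
proof -
  have "countable {t \<in> UNIV. Lp_norm I01 p (g t) powr p \<noteq> 0}"
    using g by (intro summable_countable_real) (simp add: lp_sum_def)
  moreover have "ae_support g = {t \<in> UNIV. Lp_norm I01 p (g t) powr p \<noteq> 0}"
    using ae_support_lp_sum_iff[OF g p] by auto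
  ultimately show ?thesis
    by simp
qed

lemma lp_embedding_isometry:
  assumes g: "g \<in> lp_sum I01 p" and p: "p \<ge> 1"
  shows "lp_embedding g \<in> Lp mu p" "Lp_norm mu p (lp_embedding g) = lp_sum_norm I01 p g"
proof -
  define \<phi> where "\<phi> t = Lp_norm I01 p (g t) powr p" for t
  have g_meas: "g t \<in> borel_measurable I01" for t
    using g by (rule measurable_lp_sum)
  have [measurable]: "lp_embedding g \<in> borel_measurable mu"
    using countable_ae_support[OF g p] g_meas by (rule measurable_lp_embedding)
  have "(\<integral>\<^sup>+x. ennreal (\<bar>lp_embedding g x\<bar> powr p) \<partial>mu)
      = (\<integral>\<^sup>+t. (\<integral>\<^sup>+s. ennreal (\<bar>g t s\<bar> powr p) \<partial>I01) \<partial>count_space (ae_support g))"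
    using countable_ae_support[OF g p] g_meas by (rule nn_integral_lp_embedding)
  also have "\<dots> = (\<integral>\<^sup>+t. ennreal (\<phi> t) \<partial>count_space (ae_support g))"
    using g p by (simp add: lp_sum_def nn_integral_abs_powr_Lp \<phi>_def powr_Lp_norm)
  also have "\<dots> = ennreal (\<Sum>\<^sub>\<infinity>t. \<phi> t)"
    using g ae_support_lp_sum_iff[OF g p]
    by (intro nn_integral_count_space_eq_infsum) (auto simp: \<phi>_def lp_sum_def)
  finally have nn: "(\<integral>\<^sup>+x. ennreal (\<bar>lp_embedding g x\<bar> powr p) \<partial>mu) = ennreal (\<Sum>\<^sub>\<infinity>t. \<phi> t)" .
  then have "integrable mu (\<lambda>x. \<bar>lp_embedding g x\<bar> powr p)"
    by (intro integrableI_nn_integral_finite) auto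
  then show "lp_embedding g \<in> Lp mu p"
    by (simp add: Lp_def)
  have "(\<Sum>\<^sub>\<infinity>t. \<phi> t) \<ge> 0"
    by (simp add: \<phi>_def infsum_nonneg)
  then have "(\<integral>x. \<bar>lp_embedding g x\<bar> powr p \<partial>mu) = (\<Sum>\<^sub>\<infinity>t. \<phi> t)"
    using nn by (subst integral_eq_nn_integral) auto
  then show "Lp_norm mu p (lp_embedding g) = lp_sum_norm I01 p g"
    unfolding Lp_norm_def lp_sum_norm_def \<phi>_def by simp
qed

lemma AE_lp_embedding_linear_lp_sum:
  assumes "g \<in> lp_sum I01 p" "h \<in> lp_sum I01 p" "p \<ge> 1"
  shows "AE x in mu. lp_embedding (\<lambda>t s. a * g t s + b * h t s) x
    = a * lp_embedding g x + b * lp_embedding h x"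
  using assms by (intro AE_lp_embedding_linear countable_ae_support measurable_lp_sum)

section \<open>The norm-one projection\<close>

text \<open>The average of \<open>f\<close> over the slice of \<open>cube_at t\<close> with first coordinate \<open>corner t 0 + s\<close>:
  the conditional expectation of \<open>f\<close> on the cube given the first coordinate.\<close>
definition fibre_mean :: "((nat \<Rightarrow> real) \<Rightarrow> real) \<Rightarrow> real \<Rightarrow> real \<Rightarrow> real" where
  "fibre_mean f t s = (\<integral>\<omega>. f (cube_point (corner t) s \<omega>) \<partial>I01_inf)"

lemma measurable_fibre_mean:
  assumes [measurable]: "f \<in> borel_measurable mu"
  shows "fibre_mean f t \<in> borel_measurable I01"
  unfolding fibre_mean_def
  using prob_space_imp_sigma_finite[OF prob_space_I01_inf] measurable_cube_fibres[OF assms]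
  by (rule sigma_finite_measure.borel_measurable_lebesgue_integral)

lemma nn_integral_fibre_mean_le:
  assumes [measurable]: "f \<in> borel_measurable mu" and p: "p \<ge> 1"
  shows "(\<integral>\<^sup>+s. ennreal (\<bar>fibre_mean f t s\<bar> powr p) \<partial>I01)
    \<le> (\<integral>\<^sup>+x. indicator (cube_at t) x * ennreal (\<bar>f x\<bar> powr p) \<partial>mu)"
proof -
  interpret I01_inf: prob_space I01_inf by (rule prob_space_I01_inf)
  have "(\<integral>\<^sup>+s. ennreal (\<bar>fibre_mean f t s\<bar> powr p) \<partial>I01)
      \<le> (\<integral>\<^sup>+s. \<integral>\<^sup>+\<omega>. ennreal (\<bar>f (cube_point (corner t) s \<omega>)\<bar> powr p) \<partial>I01_inf \<partial>I01)"
    unfolding fibre_mean_def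
    by (intro nn_integral_mono I01_inf.abs_integral_powr_le_nn_integral p measurable_cube_fibre) auto
  also have "\<dots> = (\<integral>\<^sup>+x. indicator (cube_at t) x * ennreal (\<bar>f x\<bar> powr p) \<partial>mu)"
    unfolding cube_at_def by (rule nn_integral_unit_cube_fibres[symmetric]) measurable
  finally show ?thesis .
qed

lemma AE_integrable_cube_fibre:
  assumes f: "f \<in> Lp mu p" and p: "p \<ge> 1"
  shows "AE s in I01. integrable I01_inf (\<lambda>\<omega>. f (cube_point (corner t) s \<omega>))"
proof -
  interpret I01_inf: prob_space I01_inf by (rule prob_space_I01_inf)
  have [measurable]: "f \<in> borel_measurable mu"
    using f by (rule measurable_Lp)
  have "(\<integral>\<^sup>+s. \<integral>\<^sup>+\<omega>. ennreal (\<bar>f (cube_point (corner t) s \<omega>)\<bar> powr p) \<partial>I01_inf \<partial>I01)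
      = (\<integral>\<^sup>+x. indicator (cube_at t) x * ennreal (\<bar>f x\<bar> powr p) \<partial>mu)"
    unfolding cube_at_def by (rule nn_integral_unit_cube_fibres[symmetric]) measurable
  also have "\<dots> \<le> (\<integral>\<^sup>+x. ennreal (\<bar>f x\<bar> powr p) \<partial>mu)"
    by (intro nn_integral_mono) (auto split: split_indicator)
  also have "\<dots> < \<infinity>"
    using f by (rule nn_integral_abs_powr_Lp_finite)
  finally have "AE s in I01. (\<integral>\<^sup>+\<omega>. ennreal (\<bar>f (cube_point (corner t) s \<omega>)\<bar> powr p) \<partial>I01_inf) \<noteq> \<infinity>"
    using prob_space_imp_sigma_finite[OF prob_space_I01_inf]
    by (intro nn_integral_PInf_AE sigma_finite_measure.borel_measurable_nn_integral) auto
  then show ?thesis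
  proof (rule AE_mp[OF _ AE_I2], intro impI)
    fix s
    assume s: "s \<in> space I01"
      and "(\<integral>\<^sup>+\<omega>. ennreal (\<bar>f (cube_point (corner t) s \<omega>)\<bar> powr p) \<partial>I01_inf) \<noteq> \<infinity>"
    then show "integrable I01_inf (\<lambda>\<omega>. f (cube_point (corner t) s \<omega>))"
      using I01_inf.integrable_if_nn_integral_abs_powr_finite[OF p measurable_cube_fibre]
      by (simp add: less_top)
  qed
qed

lemma AE_fibre_mean_linear:
  assumes "f \<in> Lp mu p" "f' \<in> Lp mu p" "p \<ge> 1"
  shows "AE s in I01. fibre_mean (\<lambda>x. a * f x + b * f' x) t s = a * fibre_mean f t s + b * fibre_mean f' t s"
  using AE_integrable_cube_fibre[OF assms(1,3), of t] AE_integrable_cube_fibre[OF assms(2,3), of t]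
  by eventually_elim (simp add: fibre_mean_def)

lemma fibre_mean_cube_embed: "s \<in> {0..1} \<Longrightarrow> fibre_mean (cube_embed G) t s = G t s"
proof -
  interpret I01_inf: prob_space I01_inf by (rule prob_space_I01_inf)
  assume "s \<in> {0..1}"
  then have "fibre_mean (cube_embed G) t s = (\<integral>\<omega>. G t s \<partial>I01_inf)"
    unfolding fibre_mean_def by (intro Bochner_Integration.integral_cong) (auto simp: cube_embed_cube_point)
  then show ?thesis
    by (simp add: I01_inf.prob_space)
qed

lemma sum_indicator_cube_at_le:
  fixes v :: ennreal
  assumes "finite F"
  shows "(\<Sum>t\<in>F. indicator (cube_at t) x * v) \<le> v"
proof (cases "\<exists>t\<^sub>0\<in>F. x \<in> cube_at t\<^sub>0")
  case True
  then obtain t\<^sub>0 where t\<^sub>0: "t\<^sub>0 \<in> F" "x \<in> cube_at t\<^sub>0"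
    by blast
  have "(\<Sum>t\<in>F - {t\<^sub>0}. indicator (cube_at t) x * v) = 0"
  proof (rule sum.neutral, intro ballI)
    fix t
    assume "t \<in> F - {t\<^sub>0}"
    then have "x \<notin> cube_at t"
      using cube_at_disjoint[of x t\<^sub>0 t] t\<^sub>0 by auto
    then show "indicator (cube_at t) x * v = 0"
      by simp
  qed
  then show ?thesis
    using sum.remove[OF assms t\<^sub>0(1), of "\<lambda>t. indicator (cube_at t) x * v"] t\<^sub>0 by simp
next
  case False
  then have "(\<Sum>t\<in>F. indicator (cube_at t) x * v) = 0"
    by (intro sum.neutral) auto
  then show ?thesis
    by simp
qed

lemma sum_nn_integral_cube_at_le:
  assumes "finite F" and [measurable]: "f \<in> borel_measurable mu"
  shows "(\<Sum>t\<in>F. \<integral>\<^sup>+x. indicator (cube_at t) x * ennreal (\<bar>f x\<bar> powr p) \<partial>mu)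
    \<le> (\<integral>\<^sup>+x. ennreal (\<bar>f x\<bar> powr p) \<partial>mu)"
proof -
  have "(\<Sum>t\<in>F. \<integral>\<^sup>+x. indicator (cube_at t) x * ennreal (\<bar>f x\<bar> powr p) \<partial>mu)
      = (\<integral>\<^sup>+x. (\<Sum>t\<in>F. indicator (cube_at t) x * ennreal (\<bar>f x\<bar> powr p)) \<partial>mu)"
    by (intro nn_integral_sum[symmetric]) measurable
  also have "\<dots> \<le> (\<integral>\<^sup>+x. ennreal (\<bar>f x\<bar> powr p) \<partial>mu)"
    using assms(1) by (intro nn_integral_mono sum_indicator_cube_at_le)
  finally show ?thesis .
qed

lemma sum_nn_integral_fibre_mean_le:
  assumes f: "f \<in> Lp mu p" and p: "p \<ge> 1" and F: "finite F"
  shows "(\<Sum>t\<in>F. \<integral>\<^sup>+s. ennreal (\<bar>fibre_mean f t s\<bar> powr p) \<partial>I01) \<le> ennreal (\<integral>x. \<bar>f x\<bar> powr p \<partial>mu)"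
proof -
  have [measurable]: "f \<in> borel_measurable mu"
    using f by (rule measurable_Lp)
  have "(\<Sum>t\<in>F. \<integral>\<^sup>+s. ennreal (\<bar>fibre_mean f t s\<bar> powr p) \<partial>I01)
      \<le> (\<Sum>t\<in>F. \<integral>\<^sup>+x. indicator (cube_at t) x * ennreal (\<bar>f x\<bar> powr p) \<partial>mu)"
    using p by (intro sum_mono nn_integral_fibre_mean_le) auto
  also have "\<dots> \<le> (\<integral>\<^sup>+x. ennreal (\<bar>f x\<bar> powr p) \<partial>mu)"
    using F by (rule sum_nn_integral_cube_at_le) measurable
  also have "\<dots> = ennreal (\<integral>x. \<bar>f x\<bar> powr p \<partial>mu)"
    using f by (rule nn_integral_abs_powr_Lp)
  finally show ?thesis .
qed

lemma fibre_mean_Lp: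
  assumes f: "f \<in> Lp mu p" and p: "p \<ge> 1"
  shows "fibre_mean f t \<in> Lp I01 p"
proof -
  have [measurable]: "fibre_mean f t \<in> borel_measurable I01"
    using f by (intro measurable_fibre_mean measurable_Lp)
  have "(\<integral>\<^sup>+s. ennreal (\<bar>fibre_mean f t s\<bar> powr p) \<partial>I01) \<le> ennreal (\<integral>x. \<bar>f x\<bar> powr p \<partial>mu)"
    using sum_nn_integral_fibre_mean_le[OF f p, of "{t}"] by simp
  then have "(\<integral>\<^sup>+s. ennreal (\<bar>fibre_mean f t s\<bar> powr p) \<partial>I01) < top"
    using ennreal_less_top by (rule le_less_trans)
  then have "integrable I01 (\<lambda>s. \<bar>fibre_mean f t s\<bar> powr p)"
    by (intro integrableI_bounded) auto
  then show ?thesis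
    by (simp add: Lp_def)
qed

lemma fibre_mean_lp_sum:
  assumes f: "f \<in> Lp mu p" and p: "p \<ge> 1"
  shows "fibre_mean f \<in> lp_sum I01 p"
    and "(\<Sum>\<^sub>\<infinity>t. Lp_norm I01 p (fibre_mean f t) powr p) \<le> (\<integral>x. \<bar>f x\<bar> powr p \<partial>mu)"
proof -
  define \<phi> where "\<phi> t = Lp_norm I01 p (fibre_mean f t) powr p" for t
  have \<phi>_nonneg: "\<phi> t \<ge> 0" for t
    by (simp add: \<phi>_def)
  have \<phi>_eq: "ennreal (\<phi> t) = (\<integral>\<^sup>+s. ennreal (\<bar>fibre_mean f t s\<bar> powr p) \<partial>I01)" for t
    using nn_integral_abs_powr_Lp[OF fibre_mean_Lp[OF f p]] p by (simp add: \<phi>_def powr_Lp_norm)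
  have sum_\<phi>: "sum \<phi> F \<le> (\<integral>x. \<bar>f x\<bar> powr p \<partial>mu)" if "finite F" for F
  proof -
    have "ennreal (sum \<phi> F) = (\<Sum>t\<in>F. ennreal (\<phi> t))"
      using \<phi>_nonneg by simp
    also have "\<dots> = (\<Sum>t\<in>F. \<integral>\<^sup>+s. ennreal (\<bar>fibre_mean f t s\<bar> powr p) \<partial>I01)"
      by (simp only: \<phi>_eq)
    also have "\<dots> \<le> ennreal (\<integral>x. \<bar>f x\<bar> powr p \<partial>mu)"
      using f p that by (rule sum_nn_integral_fibre_mean_le)
    finally show ?thesis
      by simp
  qed
  have summable: "\<phi> summable_on UNIV"
  proof (rule nonneg_bdd_above_summable_on)
    show "bdd_above (sum \<phi> ` {F. F \<subseteq> UNIV \<and> finite F})"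
      using sum_\<phi> by (intro bdd_aboveI2[where M = "\<integral>x. \<bar>f x\<bar> powr p \<partial>mu"]) auto
  qed (rule \<phi>_nonneg)
  show "fibre_mean f \<in> lp_sum I01 p"
    using fibre_mean_Lp[OF f p] summable unfolding lp_sum_def \<phi>_def by simp
  show "(\<Sum>\<^sub>\<infinity>t. Lp_norm I01 p (fibre_mean f t) powr p) \<le> (\<integral>x. \<bar>f x\<bar> powr p \<partial>mu)"
    using infsum_le_finite_sums[OF summable sum_\<phi>] unfolding \<phi>_def .
qed

definition lp_projection :: "((nat \<Rightarrow> real) \<Rightarrow> real) \<Rightarrow> (nat \<Rightarrow> real) \<Rightarrow> real" where
  "lp_projection f = lp_embedding (fibre_mean f)"

lemma lp_projection_bounded:
  assumes f: "f \<in> Lp mu p" and p: "p \<ge> 1"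
  shows "lp_projection f \<in> Lp mu p" "Lp_norm mu p (lp_projection f) \<le> Lp_norm mu p f"
proof -
  note fibre = fibre_mean_lp_sum[OF f p]
  show "lp_projection f \<in> Lp mu p"
    unfolding lp_projection_def using fibre(1) p by (rule lp_embedding_isometry(1))
  have "Lp_norm mu p (lp_projection f) = (\<Sum>\<^sub>\<infinity>t. Lp_norm I01 p (fibre_mean f t) powr p) powr (1 / p)"
    unfolding lp_projection_def lp_embedding_isometry(2)[OF fibre(1) p] lp_sum_norm_def ..
  also have "\<dots> \<le> (\<integral>x. \<bar>f x\<bar> powr p \<partial>mu) powr (1 / p)"
    using fibre(2) p by (intro powr_mono2) (auto intro!: infsum_nonneg)
  finally show "Lp_norm mu p (lp_projection f) \<le> Lp_norm mu p f"
    by (simp add: Lp_norm_def)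
qed

lemma AE_lp_projection_linear:
  assumes f: "f \<in> Lp mu p" and f': "f' \<in> Lp mu p" and p: "p \<ge> 1"
  shows "AE x in mu. lp_projection (\<lambda>y. a * f y + b * f' y) x
    = a * lp_projection f x + b * lp_projection f' x"
proof -
  have [measurable]: "f \<in> borel_measurable mu" "f' \<in> borel_measurable mu"
    using f f' by (simp_all add: measurable_Lp)
  have fibre: "fibre_mean f \<in> lp_sum I01 p" "fibre_mean f' \<in> lp_sum I01 p"
    using f f' p by (simp_all add: fibre_mean_lp_sum(1))
  define w where "w t s = a * fibre_mean f t s + b * fibre_mean f' t s" for t s
  have "countable (ae_support w)"
    using ae_support_linear[of a "fibre_mean f" b "fibre_mean f'"]
      countable_ae_support[OF fibre(1) p] countable_ae_support[OF fibre(2) p]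
    unfolding w_def[abs_def] by (blast intro: countable_subset)
  moreover have "w t \<in> borel_measurable I01" for t
    using measurable_fibre_mean[of f t] measurable_fibre_mean[of f' t] unfolding w_def by measurable
  moreover have "fibre_mean (\<lambda>y. a * f y + b * f' y) t \<in> borel_measurable I01" for t
    by (rule measurable_fibre_mean) measurable
  moreover have "AE s in I01. w t s = fibre_mean (\<lambda>y. a * f y + b * f' y) t s" for t
    using AE_fibre_mean_linear[OF f f' p, of a b t] unfolding w_def by eventually_elim simp
  ultimately have "AE x in mu. lp_embedding w x = lp_projection (\<lambda>y. a * f y + b * f' y) x"
    unfolding lp_projection_def by (rule AE_lp_embedding_eq)
  moreover have "AE x in mu. lp_embedding w x = a * lp_projection f x + b * lp_projection f' x"
    unfolding w_def[abs_def] lp_projection_def using fibre p by (rule AE_lp_embedding_linear_lp_sum)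
  ultimately show ?thesis
    by eventually_elim simp
qed

lemma AE_lp_projection_lp_embedding:
  assumes g: "g \<in> lp_sum I01 p" and p: "p \<ge> 1"
  shows "AE x in mu. lp_projection (lp_embedding g) x = lp_embedding g x"
proof -
  have meas: "g t \<in> borel_measurable I01" for t
    using g by (rule measurable_lp_sum)
  have [measurable]: "lp_embedding g \<in> borel_measurable mu"
    using countable_ae_support[OF g p] meas by (rule measurable_lp_embedding)
  have "AE s in I01. g t s = fibre_mean (lp_embedding g) t s" for t
  proof -
    have "AE s in I01. fibre_mean (lp_embedding g) t s = trim g t s"
      by (rule AE_I2) (simp add: lp_embedding_def fibre_mean_cube_embed space_I01)
    then show ?thesis
      using AE_trim_eq[of g t] by eventually_elim simp
  qed
  then have "AE x in mu. lp_embedding g x = lp_embedding (fibre_mean (lp_embedding g)) x"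
    using countable_ae_support[OF g p] meas by (intro AE_lp_embedding_eq measurable_fibre_mean) auto
  then show ?thesis
    unfolding lp_projection_def by eventually_elim simp
qed

theorem corollary3p8:
  fixes p :: real
  assumes "1 \<le> p"
  shows "\<exists>(T :: (real \<Rightarrow> real \<Rightarrow> real) \<Rightarrow> (nat \<Rightarrow> real) \<Rightarrow> real)
            (P :: ((nat \<Rightarrow> real) \<Rightarrow> real) \<Rightarrow> (nat \<Rightarrow> real) \<Rightarrow> real) (C :: real).
     (\<forall>g \<in> lp_sum I01 p. T g \<in> Lp mu p \<and> Lp_norm mu p (T g) = lp_sum_norm I01 p g)
   \<and> (\<forall>g \<in> lp_sum I01 p. \<forall>h \<in> lp_sum I01 p. \<forall>a b.
        AE x in mu. T (\<lambda>i t. a * g i t + b * h i t) x = a * T g x + b * T h x)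
   \<and> (\<forall>f \<in> Lp mu p. P f \<in> Lp mu p \<and> Lp_norm mu p (P f) \<le> C * Lp_norm mu p f)
   \<and> (\<forall>f \<in> Lp mu p. \<forall>f' \<in> Lp mu p. \<forall>a b.
        AE x in mu. P (\<lambda>y. a * f y + b * f' y) x = a * P f x + b * P f' x)
   \<and> (\<forall>f \<in> Lp mu p. \<exists>g \<in> lp_sum I01 p. AE x in mu. P f x = T g x)
   \<and> (\<forall>g \<in> lp_sum I01 p. AE x in mu. P (T g) x = T g x)"
proof -
  have range: "\<exists>g \<in> lp_sum I01 p. AE x in mu. lp_projection f x = lp_embedding g x"
    if "f \<in> Lp mu p" for f
    using fibre_mean_lp_sum(1)[OF that assms] by (auto simp: lp_projection_def)
  show ?thesis
    using lp_embedding_isometry[OF _ assms] AE_lp_embedding_linear_lp_sum[OF _ _ assms]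
      lp_projection_bounded[OF _ assms] AE_lp_projection_linear[OF _ _ assms] range
      AE_lp_projection_lp_embedding[OF _ assms]
    by (intro exI[of _ lp_embedding] exI[of _ lp_projection] exI[of _ 1]) simp
qed

end
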